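(* Let $M$ be a finite abelian group of exponent greater than $2$. Then $\mathrm{Half}(L_M)\cong C_2\times\mathrm{Aut}(L_M)$.
   Context: Let $K=\{1,a,b,c\}$ be the Klein four-group. Set $L_M=K\times M$ with the operation $(A,x)*(B,y)=(AB,xy)$ if $B=1$, and $(A,x)*(B,y)=(AB,x^{-1}y)$ if $B\neq 1$. $\mathrm{Half}(L_M)$ denotes the group (under composition) of half-automorphisms of $L_M$, i.e. bijections $f$ with $f(XY)\in\{f(X)f(Y),f(Y)f(X)\}$ for all $X,Y$; $\mathrm{Aut}(L_M)$ is the automorphism group; $C_2$ is the cyclic group of order $2$. *)

theory Defs
  imports "HOL-Algebra.Algebra"
begin

definition group_exponent :: "('a, 'b) monoid_scheme \<Rightarrow> nat" where
  "group_exponent G = (LEAST n. 0 < n \<and> (\<forall>x\<in>carrier G. x [^]\<^bsub>G\<^esub> n = \<one>\<^bsub>G\<^esub>))"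

(* Klein four-group K = {1,a,b,c} modelled as bool \<times> bool with componentwise xor;
   identity 1 = (False, False) *)
definition klein_one :: "bool \<times> bool" where
  "klein_one = (False, False)"

definition klein_mult :: "bool \<times> bool \<Rightarrow> bool \<times> bool \<Rightarrow> bool \<times> bool" where
  "klein_mult A B = (fst A \<noteq> fst B, snd A \<noteq> snd B)"

definition LM_carrier :: "('a, 'b) monoid_scheme \<Rightarrow> ((bool \<times> bool) \<times> 'a) set" where
  "LM_carrier M = (UNIV :: (bool \<times> bool) set) \<times> carrier M"

definition LM_mult :: "('a, 'b) monoid_scheme \<Rightarrow> (bool \<times> bool) \<times> 'a \<Rightarrow> (bool \<times> bool) \<times> 'a \<Rightarrow> (bool \<times> bool) \<times> 'a" where
  "LM_mult M P Q =
     (klein_mult (fst P) (fst Q),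
      if fst Q = klein_one then snd P \<otimes>\<^bsub>M\<^esub> snd Q
      else inv\<^bsub>M\<^esub> (snd P) \<otimes>\<^bsub>M\<^esub> snd Q)"

definition is_half_aut_LM :: "('a, 'b) monoid_scheme \<Rightarrow> ((bool \<times> bool) \<times> 'a \<Rightarrow> (bool \<times> bool) \<times> 'a) \<Rightarrow> bool" where
  "is_half_aut_LM M f \<longleftrightarrow>
     bij_betw f (LM_carrier M) (LM_carrier M) \<and>
     (\<forall>P\<in>LM_carrier M. \<forall>Q\<in>LM_carrier M.
        f (LM_mult M P Q) \<in> {LM_mult M (f P) (f Q), LM_mult M (f Q) (f P)})"

definition is_aut_LM :: "('a, 'b) monoid_scheme \<Rightarrow> ((bool \<times> bool) \<times> 'a \<Rightarrow> (bool \<times> bool) \<times> 'a) \<Rightarrow> bool" where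
  "is_aut_LM M f \<longleftrightarrow>
     bij_betw f (LM_carrier M) (LM_carrier M) \<and>
     (\<forall>P\<in>LM_carrier M. \<forall>Q\<in>LM_carrier M.
        f (LM_mult M P Q) = LM_mult M (f P) (f Q))"

(* Groups under composition; maps are taken extensional (undefined off the carrier) *)
definition Half_LM :: "('a, 'b) monoid_scheme \<Rightarrow> ((bool \<times> bool) \<times> 'a \<Rightarrow> (bool \<times> bool) \<times> 'a) monoid" where
  "Half_LM M = \<lparr>carrier = {f \<in> extensional (LM_carrier M). is_half_aut_LM M f},
                monoid.mult = (\<lambda>f g. compose (LM_carrier M) f g),
                one = (\<lambda>x\<in>LM_carrier M. x)\<rparr>"

definition Aut_LM :: "('a, 'b) monoid_scheme \<Rightarrow> ((bool \<times> bool) \<times> 'a \<Rightarrow> (bool \<times> bool) \<times> 'a) monoid" where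
  "Aut_LM M = \<lparr>carrier = {f \<in> extensional (LM_carrier M). is_aut_LM M f},
               monoid.mult = (\<lambda>f g. compose (LM_carrier M) f g),
               one = (\<lambda>x\<in>LM_carrier M. x)\<rparr>"

definition C2 :: "int monoid" where
  "C2 = integer_mod_group 2"

end

theory Submission
  imports Defs
begin

text \<open>A half-automorphism \<open>h\<close> of \<open>L\<^sub>M\<close> fixes the identity and permutes the involutions.
  Every element off the normal coset \<open>{1} \<times> M\<close> is an involution, so, using an element of
  order \<open>> 2\<close>, \<open>h\<close> maps \<open>{1} \<times> M\<close> onto itself and restricts there to an automorphism
  \<open>\<phi>\<close> of \<open>M\<close>. On each other coset \<open>h (A, x) = (\<sigma> A, \<tau> A \<phi>(x)\<^sup>\<plusminus>\<^sup>1)\<close>, and comparing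
  the products \<open>(A, x) (A, y)\<close> and \<open>(A, x) (B, y)\<close> shows that the sign is the same for all
  \<open>x\<close> and all three cosets. With sign \<open>+\<close>, \<open>h\<close> is an automorphism; with sign \<open>-\<close>, so is
  \<open>h\<close> followed by the half-automorphism that inverts the \<open>M\<close>-component off \<open>{1} \<times> M\<close>. This
  twist is central of order 2 and not an automorphism, which splits off the factor \<open>C\<^sub>2\<close>.\<close>

lemma klein_mult_simps [simp]:
  "klein_mult A klein_one = A" "klein_mult klein_one A = A" "klein_mult A A = klein_one"
  "klein_mult A B = klein_one \<longleftrightarrow> A = B" "klein_mult A (klein_mult A B) = B"
  by (cases A; cases B; auto simp: klein_mult_def klein_one_def)+

lemma klein_mult_commute: "klein_mult A B = klein_mult B A"
  by (auto simp: klein_mult_def)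

lemma klein_exists_third: "\<exists>B. B \<noteq> klein_one \<and> B \<noteq> A"
  by (cases A) (auto simp: klein_one_def)

lemma LM_mult_Pair [simp]:
  "LM_mult M (A, x) (B, y) =
     (klein_mult A B, if B = klein_one then x \<otimes>\<^bsub>M\<^esub> y else inv\<^bsub>M\<^esub> x \<otimes>\<^bsub>M\<^esub> y)"
  by (simp add: LM_mult_def)

lemma mem_LM_carrier [simp]: "P \<in> LM_carrier M \<longleftrightarrow> snd P \<in> carrier M"
  by (cases P) (auto simp: LM_carrier_def)

lemma aut_imp_half_aut_LM: "is_aut_LM M f \<Longrightarrow> is_half_aut_LM M f"
  by (auto simp: is_aut_LM_def is_half_aut_LM_def)

lemma inj_on_invariant_finite_notin:
  assumes "finite B" "B \<subseteq> A" "inj_on f A" "f ` B \<subseteq> B" "x \<in> A" "x \<notin> B"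
  shows "f x \<notin> B"
proof
  assume "f x \<in> B"
  moreover have "f ` B = B"
    using assms(1-4) by (intro endo_inj_surj) (auto intro: inj_on_subset)
  ultimately obtain y where "y \<in> B" "f y = f x" by (metis imageE)
  then show False
    using assms(2,3,5,6) by (metis inj_onD subsetD)
qed

text \<open>Unlike \<open>group.iso_sym\<close>, this needs no group axioms for \<open>G\<close>, only closure.\<close>

lemma iso_sym_of_mult_closed:
  assumes iso: "h \<in> iso G H"
    and closed: "\<And>x y. x \<in> carrier G \<Longrightarrow> y \<in> carrier G \<Longrightarrow> x \<otimes>\<^bsub>G\<^esub> y \<in> carrier G"
  shows "H \<cong> G"
proof (rule is_isoI, rule isoI)
  let ?k = "inv_into (carrier G) h"
  have hom: "h \<in> hom G H" and bij: "bij_betw h (carrier G) (carrier H)"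
    using iso by (auto simp: iso_def)
  then show bij_k: "bij_betw ?k (carrier H) (carrier G)"
    by (simp add: bij_betw_inv_into)
  show "?k \<in> hom H G"
  proof (rule homI)
    fix x y assume x: "x \<in> carrier H" and y: "y \<in> carrier H"
    show kx: "?k x \<in> carrier G" using bij_k x by (rule bij_betw_apply)
    have ky: "?k y \<in> carrier G" using bij_k y by (rule bij_betw_apply)
    show "?k (x \<otimes>\<^bsub>H\<^esub> y) = ?k x \<otimes>\<^bsub>G\<^esub> ?k y"
    proof (rule inv_into_f_eq)
      show "inj_on h (carrier G)" using bij by (rule bij_betw_imp_inj_on)
      show "?k x \<otimes>\<^bsub>G\<^esub> ?k y \<in> carrier G" using kx ky by (rule closed)
      show "h (?k x \<otimes>\<^bsub>G\<^esub> ?k y) = x \<otimes>\<^bsub>H\<^esub> y"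
        using hom kx ky x y bij by (simp add: hom_mult bij_betw_inv_into_right)
    qed
  qed
qed

context group
begin

lemma r_inv_assoc: "x \<in> carrier G \<Longrightarrow> y \<in> carrier G \<Longrightarrow> x \<otimes> (inv x \<otimes> y) = y"
  by (simp add: m_assoc[symmetric])

lemma square_eq_one_of_twice_fixed:
  assumes "a \<in> carrier G" "b \<in> carrier G" "b = a \<otimes> (a \<otimes> b)"
  shows "a \<otimes> a = \<one>"
  using assms by (metis m_assoc m_closed r_cancel_one')

end

context comm_group
begin

lemma inv_mult_cancel_common_left:
  "t \<in> carrier G \<Longrightarrow> a \<in> carrier G \<Longrightarrow> b \<in> carrier G \<Longrightarrow> inv (t \<otimes> a) \<otimes> (t \<otimes> b) = inv a \<otimes> b"
  by (simp add: inv_mult m_assoc m_lcomm[of "inv t"]) (simp add: m_assoc[symmetric])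

lemma self_inverse_of_left_inv_mult_cases:
  assumes "a \<in> carrier G" "b \<in> carrier G" "inv b \<otimes> a \<in> {inv b \<otimes> inv a, a \<otimes> b}"
  shows "a = inv a \<or> b = inv b"
  using assms by (auto simp: m_comm[of a])

text \<open>Membership in \<open>{w, inv w}\<close> says "equal to \<open>w\<close> up to inversion" (\<open>pm\<close>).\<close>

lemma eq_of_pm_translate:
  assumes "c \<in> carrier G" "w \<in> carrier G" "p \<in> carrier G" "p \<otimes> p \<noteq> \<one>"
    and "c \<in> {w, inv w}" "c \<otimes> p \<in> {w \<otimes> p, inv (w \<otimes> p)}"
  shows "c = w"
  using assms by (auto simp: inv_mult m_ac) (metis r_inv)

lemma square_eq_one_of_pm_pattern:
  assumes carrier: "c \<in> carrier G" "w \<in> carrier G" "W \<in> carrier G" "q \<in> carrier G"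
    and "c \<in> {w, inv w}" "c \<otimes> (inv q \<otimes> inv q) \<in> {w, inv w}"
    and "c \<otimes> inv q \<in> {W, inv W}" "c \<otimes> q \<in> {W, inv W}"
  shows "q \<otimes> q = \<one>"
proof (rule ccontr)
  assume qq: "q \<otimes> q \<noteq> \<one>"
  then have "c \<otimes> inv q \<noteq> c \<otimes> q" using carrier by (metis inv_closed l_cancel r_inv)
  with assms(7,8) have "c \<otimes> inv q = W \<and> c \<otimes> q = inv W \<or> c \<otimes> inv q = inv W \<and> c \<otimes> q = W"
    by (auto simp only: insert_iff empty_iff)
  then have "(c \<otimes> inv q) \<otimes> (c \<otimes> q) = \<one>" using carrier by auto
  then have "inv c = c" using carrier by (intro inv_equality) (simp_all add: m_ac)
  with assms(5) carrier have "w = c" "inv w = c" by auto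
  with assms(6) have "c \<otimes> (inv q \<otimes> inv q) = c \<otimes> \<one>" using carrier by simp
  then have "inv (q \<otimes> q) = \<one>" using carrier by (simp add: inv_mult)
  then show False using qq carrier by (metis inv_inv inv_one m_closed)
qed

end

locale klein_loop = comm_group M for M (structure)
begin

abbreviation "L \<equiv> LM_carrier M"
abbreviation "mul \<equiv> LM_mult M"

lemma LM_mult_closed: "P \<in> L \<Longrightarrow> Q \<in> L \<Longrightarrow> mul P Q \<in> L"
  by (cases P; cases Q) auto

lemma half_aut_mult:
  "is_half_aut_LM M f \<Longrightarrow> P \<in> L \<Longrightarrow> Q \<in> L \<Longrightarrow> f (mul P Q) \<in> {mul (f P) (f Q), mul (f Q) (f P)}"
  unfolding is_half_aut_LM_def by blast

lemma half_aut_compose: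
  assumes f: "is_half_aut_LM M f" and g: "is_half_aut_LM M g"
  shows "is_half_aut_LM M (compose L f g)"
  unfolding is_half_aut_LM_def
proof (intro conjI ballI)
  have g_bij: "bij_betw g L L" and f_bij: "bij_betw f L L"
    using f g by (auto simp: is_half_aut_LM_def)
  then show "bij_betw (compose L f g) L L" by (rule bij_betw_compose)
  fix P Q assume P: "P \<in> L" and Q: "Q \<in> L"
  then have gP: "g P \<in> L" and gQ: "g Q \<in> L" using g_bij by (blast intro: bij_betw_apply)+
  have "f (g (mul P Q)) \<in> {mul (f (g P)) (f (g Q)), mul (f (g Q)) (f (g P))}"
    using half_aut_mult[OF g P Q] half_aut_mult[OF f gP gQ] half_aut_mult[OF f gQ gP] by auto
  then show "compose L f g (mul P Q) \<in>
      {mul (compose L f g P) (compose L f g Q), mul (compose L f g Q) (compose L f g P)}"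
    using P Q LM_mult_closed[OF P Q] by (simp add: compose_eq)
qed

lemma carrier_Half_LM: "f \<in> carrier (Half_LM M) \<longleftrightarrow> f \<in> extensional L \<and> is_half_aut_LM M f"
  by (simp add: Half_LM_def)

lemma carrier_Aut_LM: "f \<in> carrier (Aut_LM M) \<longleftrightarrow> f \<in> extensional L \<and> is_aut_LM M f"
  by (simp add: Aut_LM_def)

lemma aut_closed: "is_aut_LM M f \<Longrightarrow> f \<in> L \<rightarrow> L"
  unfolding is_aut_LM_def by (blast dest: bij_betw_apply)

lemma aut_mult: "is_aut_LM M f \<Longrightarrow> P \<in> L \<Longrightarrow> Q \<in> L \<Longrightarrow> f (mul P Q) = mul (f P) (f Q)"
  unfolding is_aut_LM_def by blast

lemma aut_compose:
  assumes f: "is_aut_LM M f" and g: "is_aut_LM M g"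
  shows "is_aut_LM M (compose L f g)"
  unfolding is_aut_LM_def
proof (intro conjI ballI)
  have g_bij: "bij_betw g L L" and f_bij: "bij_betw f L L"
    using f g by (auto simp: is_aut_LM_def)
  then show "bij_betw (compose L f g) L L" by (rule bij_betw_compose)
  fix P Q assume P: "P \<in> L" and Q: "Q \<in> L"
  then have gP: "g P \<in> L" and gQ: "g Q \<in> L" using g_bij by (blast intro: bij_betw_apply)+
  have "f (g (mul P Q)) = mul (f (g P)) (f (g Q))"
    using aut_mult[OF g P Q] aut_mult[OF f gP gQ] by (rule trans[OF arg_cong])
  then show "compose L f g (mul P Q) = mul (compose L f g P) (compose L f g Q)"
    using P Q LM_mult_closed[OF P Q] by (simp add: compose_eq)
qed

definition twist where
  "twist = (\<lambda>P\<in>L. (fst P, if fst P = klein_one then snd P else inv (snd P)))"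

lemma twist_Pair [simp]: "x \<in> carrier M \<Longrightarrow> twist (A, x) = (A, if A = klein_one then x else inv x)"
  by (simp add: twist_def)

lemma twist_closed: "P \<in> L \<Longrightarrow> twist P \<in> L"
  by (cases P) simp

lemma twist_twist: "P \<in> L \<Longrightarrow> twist (twist P) = P"
  by (cases P) simp

lemma twist_half_aut: "is_half_aut_LM M twist"
  unfolding is_half_aut_LM_def
proof (intro conjI ballI)
  show "bij_betw twist L L"
    by (rule bij_betw_byWitness[where f' = twist]) (auto simp: twist_closed twist_twist)
  fix P Q assume "P \<in> L" "Q \<in> L"
  then obtain A x B y where "P = (A, x)" "Q = (B, y)" "x \<in> carrier M" "y \<in> carrier M"
    by (metis mem_LM_carrier prod.collapse snd_conv)
  then show "twist (mul P Q) \<in> {mul (twist P) (twist Q), mul (twist Q) (twist P)}"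
    by (cases "A = klein_one"; cases "B = klein_one"; cases "A = B")
      (simp_all add: inv_mult m_ac klein_mult_commute)
qed

lemma compose_twist_twist:
  assumes "f \<in> L \<rightarrow> L" and "f \<in> extensional L"
  shows "compose L twist (compose L twist f) = f"
proof (rule extensionalityI[where A = L])
  fix P assume "P \<in> L"
  moreover have "f P \<in> L" using assms(1) \<open>P \<in> L\<close> by blast
  ultimately show "compose L twist (compose L twist f) P = f P"
    by (simp add: compose_eq twist_twist)
qed (use assms(2) in simp_all)

end

locale klein_loop_exp_gt_2 = klein_loop +
  fixes g
  assumes finite_carrier: "finite (carrier M)"
    and g_closed: "g \<in> carrier M"
    and g_square: "g \<otimes> g \<noteq> \<one>"
begin

lemma finite_L: "finite L"
  using finite_carrier by (simp add: LM_carrier_def)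

definition involutions where "involutions = {P \<in> L. mul P P = (klein_one, \<one>)}"

lemma involutions_subset: "involutions \<subseteq> L"
  unfolding involutions_def by blast

lemma finite_involutions: "finite involutions"
  using finite_L involutions_subset by (rule finite_subset[rotated])

lemma twist_not_hom: "\<not> (\<forall>P\<in>L. \<forall>Q\<in>L. twist (mul P Q) = mul (twist P) (twist Q))"
proof
  let ?A = "(True, False)"
  assume hom: "\<forall>P\<in>L. \<forall>Q\<in>L. twist (mul P Q) = mul (twist P) (twist Q)"
  have "twist (mul (?A, g) (?A, \<one>)) = mul (twist (?A, g)) (twist (?A, \<one>))"
    using g_closed by (intro hom[rule_format]) simp_all
  then have "inv g = g" using g_closed by (simp add: klein_one_def)
  then show False using g_closed g_square by (metis r_inv)
qed

lemma aut_compose_twist_not_aut: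
  assumes f: "is_aut_LM M f"
  shows "\<not> is_aut_LM M (compose L twist f)"
proof
  assume tf: "is_aut_LM M (compose L twist f)"
  have "twist (mul R S) = mul (twist R) (twist S)" if "R \<in> L" "S \<in> L" for R S
  proof -
    have "f ` L = L" using f by (simp add: is_aut_LM_def bij_betw_def)
    then have "R \<in> f ` L" "S \<in> f ` L" using that by simp_all
    then obtain P Q where PQ: "P \<in> L" "Q \<in> L" "R = f P" "S = f Q" by blast
    have "twist (mul R S) = compose L twist f (mul P Q)"
      using PQ LM_mult_closed[OF PQ(1,2)] by (simp add: aut_mult[OF f PQ(1,2)] compose_eq)
    also have "\<dots> = mul (compose L twist f P) (compose L twist f Q)"
      by (rule aut_mult[OF tf PQ(1,2)])
    also have "\<dots> = mul (twist R) (twist S)"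
      using PQ by (simp add: compose_eq)
    finally show ?thesis .
  qed
  with twist_not_hom show False by blast
qed

end

locale LM_half_aut = klein_loop_exp_gt_2 +
  fixes h
  assumes half_aut: "is_half_aut_LM M h"
begin

lemma h_bij: "bij_betw h L L"
  using half_aut by (simp add: is_half_aut_LM_def)

lemma h_closed: "P \<in> L \<Longrightarrow> h P \<in> L"
  using h_bij by (rule bij_betw_apply)

lemma h_inj: "inj_on h L"
  using h_bij by (rule bij_betw_imp_inj_on)

lemma h_mult: "P \<in> L \<Longrightarrow> Q \<in> L \<Longrightarrow> h (mul P Q) \<in> {mul (h P) (h Q), mul (h Q) (h P)}"
  using half_aut by (rule half_aut_mult)

lemma h_one: "h (klein_one, \<one>) = (klein_one, \<one>)"
proof -
  obtain A x where hx: "h (klein_one, \<one>) = (A, x)" by fastforce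
  then have x: "x \<in> carrier M" using h_closed[of "(klein_one, \<one>)"] by simp
  have "h (klein_one, \<one>) = mul (h (klein_one, \<one>)) (h (klein_one, \<one>))"
    using h_mult[of "(klein_one, \<one>)" "(klein_one, \<one>)"] by simp
  then have "A = klein_one" "x = x \<otimes> x" using hx by (auto split: if_splits)
  moreover have "x = \<one>"
    using x \<open>x = x \<otimes> x\<close> by (metis l_cancel one_closed r_one)
  ultimately show ?thesis using hx by simp
qed

lemma h_involutions: "h ` involutions \<subseteq> involutions"
proof
  fix Q assume "Q \<in> h ` involutions"
  then obtain P where P: "P \<in> L" "mul P P = (klein_one, \<one>)" and Q: "Q = h P"
    by (auto simp: involutions_def)
  have "mul (h P) (h P) = h (mul P P)" using h_mult[OF P(1) P(1)] by simp
  with P Q h_closed h_one show "Q \<in> involutions" by (simp add: involutions_def)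
qed

text \<open>Off the coset \<open>{klein_one} \<times> M\<close> every element is an involution, so the
  non-involutions, which \<open>h\<close> permutes, are the \<open>(klein_one, x)\<close> with \<open>x \<otimes> x \<noteq> \<one>\<close>.\<close>

lemma fst_h_normal_noninvolution:
  assumes x: "x \<in> carrier M" "x \<otimes> x \<noteq> \<one>"
  shows "fst (h (klein_one, x)) = klein_one"
proof -
  have "(klein_one, x) \<notin> involutions" using x by (simp add: involutions_def)
  then have "h (klein_one, x) \<notin> involutions"
    using x by (intro inj_on_invariant_finite_notin[OF finite_involutions involutions_subset
        h_inj h_involutions]) simp_all
  moreover obtain B y where "h (klein_one, x) = (B, y)" "y \<in> carrier M"
    using h_closed[of "(klein_one, x)"] x by (metis mem_LM_carrier prod.collapse snd_conv)
  ultimately show ?thesis by (auto simp: involutions_def split: if_splits)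
qed

lemma fst_h_normal:
  assumes x: "x \<in> carrier M"
  shows "fst (h (klein_one, x)) = klein_one"
proof (cases "x \<otimes> x = \<one>")
  case False
  with x show ?thesis by (rule fst_h_normal_noninvolution)
next
  case True
  have gx: "g \<otimes> x \<in> carrier M" "(g \<otimes> x) \<otimes> (g \<otimes> x) \<noteq> \<one>"
    using True x g_closed g_square by (simp_all add: m_ac)
  have "h (klein_one, g \<otimes> x) \<in>
      {mul (h (klein_one, g)) (h (klein_one, x)), mul (h (klein_one, x)) (h (klein_one, g))}"
    using h_mult[of "(klein_one, g)" "(klein_one, x)"] x g_closed by simp
  moreover have "fst (h (klein_one, g \<otimes> x)) = klein_one" "fst (h (klein_one, g)) = klein_one"
    using fst_h_normal_noninvolution gx g_closed g_square by auto
  ultimately show ?thesis by (auto simp: LM_mult_def)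
qed

definition phi where "phi x = snd (h (klein_one, x))"
definition sigma where "sigma A = fst (h (A, \<one>))"
definition tau where "tau A = snd (h (A, \<one>))"
definition psi where "psi A x = snd (h (A, x))"

lemma phi_closed [simp]: "x \<in> carrier M \<Longrightarrow> phi x \<in> carrier M"
  using h_closed[of "(klein_one, x)"] by (simp add: phi_def)

lemma tau_closed [simp]: "tau A \<in> carrier M"
  using h_closed[of "(A, \<one>)"] by (simp add: tau_def)

lemma psi_closed [simp]: "x \<in> carrier M \<Longrightarrow> psi A x \<in> carrier M"
  using h_closed[of "(A, x)"] by (simp add: psi_def)

lemma psi_one [simp]: "psi A \<one> = tau A"
  by (simp add: psi_def tau_def)

lemma h_normal: "x \<in> carrier M \<Longrightarrow> h (klein_one, x) = (klein_one, phi x)"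
  using fst_h_normal by (simp add: phi_def prod_eq_iff)

lemma phi_mult:
  assumes "x \<in> carrier M" "y \<in> carrier M"
  shows "phi (x \<otimes> y) = phi x \<otimes> phi y"
proof -
  have "(klein_one, phi (x \<otimes> y)) \<in> {(klein_one, phi x \<otimes> phi y), (klein_one, phi y \<otimes> phi x)}"
    using h_mult[of "(klein_one, x)" "(klein_one, y)"] assms by (simp add: h_normal)
  then show ?thesis using assms by (auto simp: m_comm)
qed

lemma phi_one [simp]: "phi \<one> = \<one>"
  using h_one by (simp add: phi_def)

lemma phi_inv [simp]: "x \<in> carrier M \<Longrightarrow> phi (inv x) = inv (phi x)"
  by (metis inv_closed inv_equality phi_mult phi_one phi_closed l_inv)

lemma phi_inj: "x \<in> carrier M \<Longrightarrow> y \<in> carrier M \<Longrightarrow> phi x = phi y \<Longrightarrow> x = y"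
  using h_inj h_normal by (metis inj_onD mem_LM_carrier prod.inject snd_conv)

lemma phi_g_square: "phi g \<otimes> phi g \<noteq> \<one>"
  using g_closed g_square phi_inj[of "g \<otimes> g" \<one>] phi_mult[OF g_closed g_closed] by force

lemma sigma_ne_one:
  assumes A: "A \<noteq> klein_one"
  shows "sigma A \<noteq> klein_one"
proof
  let ?N = "{klein_one} \<times> carrier M"
  assume "sigma A = klein_one"
  then have "h (A, \<one>) \<in> ?N"
    using h_closed[of "(A, \<one>)"] by (simp add: sigma_def mem_Times_iff)
  moreover have "h (A, \<one>) \<notin> ?N"
  proof (rule inj_on_invariant_finite_notin[OF _ _ h_inj])
    show "finite ?N" using finite_carrier by simp
    show "?N \<subseteq> L" by (auto simp: LM_carrier_def)
    show "h ` ?N \<subseteq> ?N" by (auto simp: h_normal)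
  qed (use A in auto)
  ultimately show False by contradiction
qed

lemma h_coset_one: "h (A, \<one>) = (sigma A, tau A)"
  by (simp add: sigma_def tau_def)

lemma h_coset_cases:
  assumes "A \<noteq> klein_one" "x \<in> carrier M"
  shows "h (A, x) \<in> {(sigma A, tau A \<otimes> phi x), (sigma A, tau A \<otimes> inv (phi x))}"
proof -
  have "h (A, x) \<in> {mul (h (A, \<one>)) (h (klein_one, x)), mul (h (klein_one, x)) (h (A, \<one>))}"
    using h_mult[of "(A, \<one>)" "(klein_one, x)"] assms by simp
  then show ?thesis using assms sigma_ne_one by (auto simp: h_coset_one h_normal m_comm)
qed

lemma h_coset: "A \<noteq> klein_one \<Longrightarrow> x \<in> carrier M \<Longrightarrow> h (A, x) = (sigma A, psi A x)"
  using h_coset_cases by (fastforce simp: psi_def)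

lemma psi_cases:
  "A \<noteq> klein_one \<Longrightarrow> x \<in> carrier M \<Longrightarrow> psi A x \<in> {tau A \<otimes> phi x, tau A \<otimes> inv (phi x)}"
  using h_coset_cases by (fastforce simp: h_coset)

lemma phi_same_coset:
  assumes A: "A \<noteq> klein_one" and x: "x \<in> carrier M" and y: "y \<in> carrier M"
  shows "phi (inv x \<otimes> y) \<in> {inv (psi A x) \<otimes> psi A y, inv (psi A y) \<otimes> psi A x}"
  using h_mult[of "(A, x)" "(A, y)"] assms sigma_ne_one[OF A] by (auto simp: h_coset h_normal)

lemma h_distinct_cosets:
  assumes A: "A \<noteq> klein_one" and B: "B \<noteq> klein_one" and AB: "A \<noteq> B"
    and x: "x \<in> carrier M" and y: "y \<in> carrier M"
  shows "sigma (klein_mult A B) = klein_mult (sigma A) (sigma B)"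
    and "psi (klein_mult A B) (inv x \<otimes> y) \<in> {inv (psi A x) \<otimes> psi B y, inv (psi B y) \<otimes> psi A x}"
proof -
  have "h (klein_mult A B, inv x \<otimes> y) \<in> {mul (h (A, x)) (h (B, y)), mul (h (B, y)) (h (A, x))}"
    using h_mult[of "(A, x)" "(B, y)"] x y B by simp
  moreover have "klein_mult A B \<noteq> klein_one" using AB by simp
  ultimately show "sigma (klein_mult A B) = klein_mult (sigma A) (sigma B)"
    and "psi (klein_mult A B) (inv x \<otimes> y) \<in> {inv (psi A x) \<otimes> psi B y, inv (psi B y) \<otimes> psi A x}"
    using A B x y sigma_ne_one[OF A] sigma_ne_one[OF B] by (auto simp: h_coset klein_mult_commute)
qed

definition direct where "direct A \<longleftrightarrow> (\<forall>x\<in>carrier M. psi A x = tau A \<otimes> phi x)"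
definition inverted where "inverted A \<longleftrightarrow> (\<forall>x\<in>carrier M. psi A x = tau A \<otimes> inv (phi x))"

lemma direct_psi: "direct A \<Longrightarrow> x \<in> carrier M \<Longrightarrow> psi A x = tau A \<otimes> phi x"
  unfolding direct_def by blast

lemma inverted_psi: "inverted A \<Longrightarrow> x \<in> carrier M \<Longrightarrow> psi A x = tau A \<otimes> inv (phi x)"
  unfolding inverted_def by blast

lemma direct_or_inverted:
  assumes A: "A \<noteq> klein_one"
  shows "direct A \<or> inverted A"
proof (rule ccontr)
  assume "\<not> ?thesis"
  then obtain a b where a: "a \<in> carrier M" "psi A a \<noteq> tau A \<otimes> phi a"
    and b: "b \<in> carrier M" "psi A b \<noteq> tau A \<otimes> inv (phi b)"
    by (auto simp: direct_def inverted_def)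
  then have pa: "psi A a = tau A \<otimes> inv (phi a)" and pb: "psi A b = tau A \<otimes> phi b"
    using psi_cases[OF A] by auto
  have "inv (phi b) \<otimes> phi a \<in> {inv (psi A b) \<otimes> psi A a, inv (psi A a) \<otimes> psi A b}"
    using phi_same_coset[OF A b(1) a(1)] a b by (simp add: phi_mult)
  also have "\<dots> = {inv (phi b) \<otimes> inv (phi a), phi a \<otimes> phi b}"
    using a b by (simp add: pa pb inv_mult_cancel_common_left)
  finally have "phi a = inv (phi a) \<or> phi b = inv (phi b)"
    using a b by (intro self_inverse_of_left_inv_mult_cases) simp_all
  then show False using a pa b pb by auto
qed

lemma not_direct_and_inverted:
  assumes A: "A \<noteq> klein_one" and B: "B \<noteq> klein_one" and AB: "A \<noteq> B"
    and "direct A" and "inverted B"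
  shows False
proof -
  define C where "C = klein_mult A B"
  define p where "p = phi g"
  define w where "w = inv (tau A) \<otimes> tau B"
  have C: "C \<noteq> klein_one" using AB by (simp add: C_def)
  have p: "p \<in> carrier M" "p \<otimes> p \<noteq> \<one>" using g_closed phi_g_square by (simp_all add: p_def)
  have rel: "psi C (inv x \<otimes> y) \<in> {inv (psi A x) \<otimes> psi B y, inv (psi B y) \<otimes> psi A x}"
    if "x \<in> carrier M" "y \<in> carrier M" for x y
    unfolding C_def using h_distinct_cosets(2)[OF A B AB that] .
  have "tau C \<in> {w, inv w}"
    using rel[of \<one> \<one>] by (simp add: w_def inv_mult m_ac r_inv_assoc)
  moreover have "psi C (inv g \<otimes> inv g) \<in> {w, inv w}"
    using rel[of g "inv g"] g_closed p(1)
    by (simp add: direct_psi[OF \<open>direct A\<close>] inverted_psi[OF \<open>inverted B\<close>] p_def[symmetric]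
        w_def inv_mult m_ac r_inv_assoc)
  moreover have "psi C (inv g) \<in> {w \<otimes> inv p, inv (w \<otimes> inv p)}"
    using rel[of g \<one>] g_closed p(1)
    by (simp add: direct_psi[OF \<open>direct A\<close>] p_def[symmetric] w_def inv_mult m_ac r_inv_assoc)
  moreover have "psi C g \<in> {w \<otimes> inv p, inv (w \<otimes> inv p)}"
    using rel[of \<one> g] g_closed p(1)
    by (simp add: inverted_psi[OF \<open>inverted B\<close>] p_def[symmetric] w_def inv_mult m_ac r_inv_assoc)
  moreover obtain q where q: "q \<in> carrier M" "q \<otimes> q \<noteq> \<one>"
    and "psi C g = tau C \<otimes> q" "psi C (inv g) = tau C \<otimes> inv q"
    and "psi C (inv g \<otimes> inv g) = tau C \<otimes> (inv q \<otimes> inv q)"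
  proof (cases "direct C")
    case True
    with that[of p] p g_closed show ?thesis
      by (simp add: direct_psi p_def phi_mult)
  next
    case False
    then have "inverted C" using direct_or_inverted[OF C] by blast
    moreover have "inv p \<otimes> inv p \<noteq> \<one>"
      using p by (metis inv_mult inv_one inv_inv m_closed)
    ultimately show ?thesis using that[of "inv p"] p g_closed
      by (simp add: inverted_psi p_def phi_mult inv_mult)
  qed
  ultimately have "q \<otimes> q = \<one>"
    using p(1) q(1)
    by (intro square_eq_one_of_pm_pattern[of "tau C" w "w \<otimes> inv p" q]) (simp_all add: w_def)
  with q(2) show False ..
qed

lemma all_direct_or_all_inverted:
  "(\<forall>A. A \<noteq> klein_one \<longrightarrow> direct A) \<or> (\<forall>A. A \<noteq> klein_one \<longrightarrow> inverted A)"
proof (rule ccontr)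
  assume "\<not> ?thesis"
  then obtain A B where A: "A \<noteq> klein_one" "\<not> direct A" and B: "B \<noteq> klein_one" "\<not> inverted B"
    by blast
  then have "inverted A" "direct B" using direct_or_inverted by blast+
  with A B show False using not_direct_and_inverted[of B A] by blast
qed

lemma tau_mult_of_all_direct:
  assumes all: "\<forall>A. A \<noteq> klein_one \<longrightarrow> direct A"
    and A: "A \<noteq> klein_one" and B: "B \<noteq> klein_one" and AB: "A \<noteq> B"
  shows "tau (klein_mult A B) = inv (tau A) \<otimes> tau B"
proof -
  define C where "C = klein_mult A B"
  define p where "p = phi g"
  have C: "C \<noteq> klein_one" using AB by (simp add: C_def)
  have p: "p \<in> carrier M" "p \<otimes> p \<noteq> \<one>" using g_closed phi_g_square by (simp_all add: p_def)
  have dB: "direct B" and dC: "direct C" using all B C by blast+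
  have pm: "tau C \<in> {inv (tau A) \<otimes> tau B, inv (inv (tau A) \<otimes> tau B)}"
    using h_distinct_cosets(2)[OF A B AB one_closed one_closed]
    by (simp add: C_def inv_mult m_ac)
  have pm_translate: "tau C \<otimes> p \<in> {inv (tau A) \<otimes> tau B \<otimes> p, inv (inv (tau A) \<otimes> tau B \<otimes> p)}"
    using h_distinct_cosets(2)[OF A B AB one_closed g_closed] g_closed p(1)
      direct_psi[OF dC g_closed] direct_psi[OF dB g_closed]
    by (simp add: C_def p_def[symmetric] inv_mult m_ac)
  have "tau C = inv (tau A) \<otimes> tau B"
    by (rule eq_of_pm_translate[OF _ _ p pm pm_translate]) simp_all
  then show ?thesis by (simp add: C_def)
qed

lemma hom_of_all_direct:
  assumes all: "\<forall>A. A \<noteq> klein_one \<longrightarrow> direct A" and P: "P \<in> L" and Q: "Q \<in> L"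
  shows "h (mul P Q) = mul (h P) (h Q)"
proof -
  obtain A x B y where PQ: "P = (A, x)" "Q = (B, y)" by fastforce
  have x: "x \<in> carrier M" and y: "y \<in> carrier M" using P Q PQ by auto
  have h_direct: "h (A', z) = (sigma A', tau A' \<otimes> phi z)"
    if "A' \<noteq> klein_one" "z \<in> carrier M" for A' z
    using that all by (simp add: h_coset direct_psi del: split_paired_All)
  consider "A = klein_one" "B = klein_one" | "A \<noteq> klein_one" "B = klein_one"
    | "A = klein_one" "B \<noteq> klein_one" | "A \<noteq> klein_one" "A = B"
    | "A \<noteq> klein_one" "B \<noteq> klein_one" "A \<noteq> B"
    by blast
  then show ?thesis
  proof cases
    case 1
    then show ?thesis using x y PQ by (simp add: h_normal phi_mult)
  next
    case 2
    then show ?thesis using x y PQ by (simp add: h_normal h_direct phi_mult m_assoc)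
  next
    case 3
    then show ?thesis using x y PQ sigma_ne_one by (simp add: h_normal h_direct phi_mult m_lcomm)
  next
    case 4
    then show ?thesis
      using x y PQ sigma_ne_one by (simp add: h_normal h_direct phi_mult inv_mult_cancel_common_left)
  next
    case 5
    then have "klein_mult A B \<noteq> klein_one" by simp
    with 5 show ?thesis
      using x y PQ sigma_ne_one h_distinct_cosets(1)[OF 5 x y] tau_mult_of_all_direct[OF all 5]
      by (simp add: h_direct phi_mult inv_mult m_ac)
  qed
qed

lemma aut_or_twist_aut: "is_aut_LM M h \<or> is_aut_LM M (compose L twist h)"
proof (cases "\<forall>A. A \<noteq> klein_one \<longrightarrow> direct A")
  case True
  then have "is_aut_LM M h" using h_bij hom_of_all_direct by (simp add: is_aut_LM_def)
  then show ?thesis ..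
next
  case False
  then have inv_all: "\<forall>A. A \<noteq> klein_one \<longrightarrow> inverted A" using all_direct_or_all_inverted by blast
  interpret T: LM_half_aut M g "compose L twist h"
    by unfold_locales (rule half_aut_compose[OF twist_half_aut half_aut])
  have T_h: "compose L twist h P = twist (h P)" if "P \<in> L" for P
    using that by (simp add: compose_eq)
  have T_phi: "T.phi x = phi x" if "x \<in> carrier M" for x
    using that by (simp add: T.phi_def T_h h_normal)
  have T_psi: "T.psi A x = inv (psi A x)" if "A \<noteq> klein_one" "x \<in> carrier M" for A x
    using that sigma_ne_one by (simp add: T.psi_def T_h h_coset)
  have "T.direct A" if A: "A \<noteq> klein_one" for A
    unfolding T.direct_def
  proof
    fix x assume x: "x \<in> carrier M"
    have "T.tau A = inv (tau A)" using T_psi[OF A one_closed] by simp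
    moreover have "inverted A" using inv_all A by blast
    ultimately show "T.psi A x = T.tau A \<otimes> T.phi x"
      using A x by (simp add: T_psi T_phi inverted_psi inv_mult)
  qed
  then have "is_aut_LM M (compose L twist h)"
    using T.h_bij T.hom_of_all_direct by (simp add: is_aut_LM_def)
  then show ?thesis ..
qed

end

locale LM_aut = LM_half_aut +
  assumes hom: "P \<in> L \<Longrightarrow> Q \<in> L \<Longrightarrow> h (mul P Q) = mul (h P) (h Q)"
begin

lemma h_coset_hom: "A \<noteq> klein_one \<Longrightarrow> x \<in> carrier M \<Longrightarrow> h (A, x) = (sigma A, tau A \<otimes> phi x)"
  using hom[of "(A, \<one>)" "(klein_one, x)"] by (simp add: h_normal h_coset_one)

lemma tau_square:
  assumes A: "A \<noteq> klein_one"
  shows "tau A \<otimes> tau A = \<one>"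
proof -
  obtain B where B: "B \<noteq> klein_one" "B \<noteq> A" using klein_exists_third by blast
  define C where "C = klein_mult A B"
  have C: "C \<noteq> klein_one" "klein_mult A C = B" using B by (auto simp: C_def)
  have e1: "tau C = inv (tau A) \<otimes> tau B"
    using hom[of "(A, \<one>)" "(B, \<one>)"] B sigma_ne_one[OF B(1)] by (simp add: C_def h_coset_one)
  have e2: "tau B = inv (tau A) \<otimes> tau C"
    using hom[of "(A, \<one>)" "(C, \<one>)"] C sigma_ne_one[OF C(1)] by (simp add: h_coset_one)
  have "inv (tau A) \<otimes> inv (tau A) = \<one>"
    by (rule square_eq_one_of_twice_fixed[OF _ _ e2[unfolded e1]]) simp_all
  then show ?thesis by (simp add: inv_mult[symmetric])
qed

lemma tau_inv: "A \<noteq> klein_one \<Longrightarrow> inv (tau A) = tau A"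
  using tau_square by (simp add: inv_equality)

lemma h_twist:
  assumes "P \<in> L"
  shows "h (twist P) = twist (h P)"
proof -
  obtain A x where "P = (A, x)" "x \<in> carrier M"
    using assms by (metis mem_LM_carrier prod.collapse snd_conv)
  then show ?thesis
    by (cases "A = klein_one") (simp_all add: h_normal h_coset_hom sigma_ne_one inv_mult tau_inv)
qed

end

lemma carrier_C2: "carrier C2 = {0, 1}"
  by (auto simp: C2_def carrier_integer_mod_group)

lemma mult_C2: "x \<otimes>\<^bsub>C2\<^esub> y = (x + y) mod 2"
  by (simp add: C2_def)

context klein_loop_exp_gt_2
begin

lemma aut_twist_commute: "is_aut_LM M f \<Longrightarrow> P \<in> L \<Longrightarrow> f (twist P) = twist (f P)"
proof -
  assume f: "is_aut_LM M f" and P: "P \<in> L"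
  interpret LM_aut M g f
    using f by unfold_locales (auto simp: aut_imp_half_aut_LM aut_mult)
  show ?thesis using P by (rule h_twist)
qed

definition sign_twist :: "int \<times> ((bool \<times> bool) \<times> 'a \<Rightarrow> (bool \<times> bool) \<times> 'a) \<Rightarrow> _" where
  "sign_twist = (\<lambda>(k, f). if k = 0 then f else compose L twist f)"

lemma sign_twist_closed:
  assumes "z \<in> carrier (C2 \<times>\<times> Aut_LM M)"
  shows "sign_twist z \<in> carrier (Half_LM M)"
proof -
  obtain k f where "z = (k, f)" "f \<in> extensional L" "is_half_aut_LM M f"
    using assms by (auto simp: carrier_Aut_LM aut_imp_half_aut_LM)
  then show ?thesis
    using half_aut_compose[OF twist_half_aut] by (simp add: sign_twist_def carrier_Half_LM)
qed

lemma sign_twist_mult: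
  assumes "z1 \<in> carrier (C2 \<times>\<times> Aut_LM M)" "z2 \<in> carrier (C2 \<times>\<times> Aut_LM M)"
  shows "sign_twist (z1 \<otimes>\<^bsub>C2 \<times>\<times> Aut_LM M\<^esub> z2) = sign_twist z1 \<otimes>\<^bsub>Half_LM M\<^esub> sign_twist z2"
proof -
  obtain k1 f1 k2 f2 where z: "z1 = (k1, f1)" "z2 = (k2, f2)"
    and k: "k1 \<in> {0, 1}" "k2 \<in> {0, 1}" and f: "is_aut_LM M f1" "is_aut_LM M f2"
    using assms by (auto simp: carrier_C2 carrier_Aut_LM)
  have "sign_twist ((k1 + k2) mod 2, compose L f1 f2) =
      compose L (sign_twist (k1, f1)) (sign_twist (k2, f2))"
  proof (rule extensionalityI[where A = L])
    fix P assume P: "P \<in> L"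
    then have "f2 P \<in> L" "twist P \<in> L" "twist (f2 P) \<in> L" "f1 (f2 P) \<in> L"
      using aut_closed[OF f(1)] aut_closed[OF f(2)] twist_closed by blast+
    then show "sign_twist ((k1 + k2) mod 2, compose L f1 f2) P =
        compose L (sign_twist (k1, f1)) (sign_twist (k2, f2)) P"
      using k P by (auto simp: sign_twist_def compose_eq aut_twist_commute[OF f(1)] twist_twist)
  qed (auto simp: sign_twist_def)
  then show ?thesis by (simp add: z DirProd_def mult_C2 Aut_LM_def Half_LM_def)
qed

lemma inj_on_sign_twist: "inj_on sign_twist (carrier (C2 \<times>\<times> Aut_LM M))"
proof (rule inj_onI)
  fix z1 z2
  assume "z1 \<in> carrier (C2 \<times>\<times> Aut_LM M)" "z2 \<in> carrier (C2 \<times>\<times> Aut_LM M)"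
    and eq: "sign_twist z1 = sign_twist z2"
  then obtain k1 f1 k2 f2 where z: "z1 = (k1, f1)" "z2 = (k2, f2)"
    and k: "k1 \<in> {0, 1}" "k2 \<in> {0, 1}" and f: "is_aut_LM M f1" "is_aut_LM M f2"
    and ext: "f1 \<in> extensional L" "f2 \<in> extensional L"
    by (auto simp: carrier_C2 carrier_Aut_LM)
  show "z1 = z2"
  proof (cases "k1 = k2")
    case True
    have "f1 = f2"
    proof (cases "k1 = 0")
      case False
      with True k eq have "compose L twist f1 = compose L twist f2" by (simp add: z sign_twist_def)
      then show ?thesis
        using compose_twist_twist[OF aut_closed[OF f(1)] ext(1)]
          compose_twist_twist[OF aut_closed[OF f(2)] ext(2)] by metis
    qed (use True eq z sign_twist_def in simp)
    with True z show ?thesis by simp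
  next
    case False
    with k eq have "is_aut_LM M (compose L twist f1) \<or> is_aut_LM M (compose L twist f2)"
      using f by (auto simp: z sign_twist_def)
    then show ?thesis using aut_compose_twist_not_aut f by blast
  qed
qed

lemma sign_twist_onto: "sign_twist ` carrier (C2 \<times>\<times> Aut_LM M) = carrier (Half_LM M)"
proof
  show "sign_twist ` carrier (C2 \<times>\<times> Aut_LM M) \<subseteq> carrier (Half_LM M)"
    using sign_twist_closed by blast
  show "carrier (Half_LM M) \<subseteq> sign_twist ` carrier (C2 \<times>\<times> Aut_LM M)"
  proof
    fix h assume "h \<in> carrier (Half_LM M)"
    then have ext: "h \<in> extensional L" and half: "is_half_aut_LM M h"
      by (simp_all add: carrier_Half_LM)
    interpret LM_half_aut M g h by unfold_locales (fact half)
    consider "is_aut_LM M h" | "is_aut_LM M (compose L twist h)"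
      using aut_or_twist_aut by blast
    then show "h \<in> sign_twist ` carrier (C2 \<times>\<times> Aut_LM M)"
    proof cases
      case 1
      then have "(0, h) \<in> carrier (C2 \<times>\<times> Aut_LM M)"
        using ext by (simp add: carrier_C2 carrier_Aut_LM)
      then show ?thesis by (force simp: sign_twist_def)
    next
      case 2
      then have "(1, compose L twist h) \<in> carrier (C2 \<times>\<times> Aut_LM M)"
        by (simp add: carrier_C2 carrier_Aut_LM)
      moreover have "sign_twist (1, compose L twist h) = h"
        using compose_twist_twist[OF _ ext] h_closed by (simp add: sign_twist_def Pi_iff)
      ultimately show ?thesis by (metis image_eqI)
    qed
  qed
qed

lemma sign_twist_iso: "sign_twist \<in> iso (C2 \<times>\<times> Aut_LM M) (Half_LM M)"
  using sign_twist_closed sign_twist_mult inj_on_sign_twist sign_twist_onto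
  by (auto simp: iso_def hom_def bij_betw_def)

theorem Half_LM_iso: "Half_LM M \<cong> C2 \<times>\<times> Aut_LM M"
proof (rule iso_sym_of_mult_closed[OF sign_twist_iso])
  fix x y assume "x \<in> carrier (C2 \<times>\<times> Aut_LM M)" "y \<in> carrier (C2 \<times>\<times> Aut_LM M)"
  then show "x \<otimes>\<^bsub>C2 \<times>\<times> Aut_LM M\<^esub> y \<in> carrier (C2 \<times>\<times> Aut_LM M)"
    by (auto simp: DirProd_def carrier_C2 mult_C2 carrier_Aut_LM aut_compose Aut_LM_def)
qed

end

lemma (in monoid) exists_square_ne_one:
  assumes "group_exponent G > 2"
  shows "\<exists>x\<in>carrier G. x \<otimes> x \<noteq> \<one>"
proof (rule ccontr)
  assume "\<not> ?thesis"
  then have "\<forall>x\<in>carrier G. x [^] (2::nat) = \<one>"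
    by (auto simp: numeral_2_eq_2)
  then have "group_exponent G \<le> 2"
    unfolding group_exponent_def by (intro Least_le) simp
  with assms show False by simp
qed

theorem corollary5p4:
  fixes M :: "('a, 'b) monoid_scheme"
  assumes "comm_group M"
    and "finite (carrier M)"
    and "group_exponent M > 2"
  shows "Half_LM M \<cong> C2 \<times>\<times> Aut_LM M"
proof -
  interpret comm_group M by fact
  obtain g where "g \<in> carrier M" "g \<otimes>\<^bsub>M\<^esub> g \<noteq> \<one>\<^bsub>M\<^esub>"
    using exists_square_ne_one assms(3) by blast
  then interpret klein_loop_exp_gt_2 M g
    using assms(2) by unfold_locales
  show ?thesis by (rule Half_LM_iso)
qed

end
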